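(* Let $f$ be a real function infinitely differentiable on a neighborhood of $0$, and write $c_k^f=f^{(k)}(0)$. For $n,k\in\mathbb{N}_0$ define \[ b_{n,k}=\frac{1}{k!}\sum_{i=0}^{k}(-1)^i\binom{k}{i}(k-i)^{\llbracket n\rrbracket},\qquad a_n=\frac{1}{n!}\sum_{k=0}^{n}c_k^f\,b_{n,k}. \] Then the function $\mathcal{A}^{f,D_3}(x)=\sum_{n=0}^{\infty}a_n[\ln(x+1)]^n$ matches all derivatives of $f$ at $0$; precisely, for every $N\in\mathbb{N}_0$, the function $x\mapsto\sum_{n=0}^{N}a_n[\ln(x+1)]^n$ satisfies \[ \frac{d^m}{dx^m}\Big[\sum_{n=0}^{N}a_n[\ln(x+1)]^n\Big]_{x=0}=f^{(m)}(0)\qquad\text{for all }0\le m\le N . \]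
   Context: The generalized exponentiation is defined by $x^{\llbracket y\rrbracket}=1$ if $x=y=0$, and $x^{\llbracket y\rrbracket}=x^y$ otherwise; with this convention $b_{n,k}$ are the Stirling numbers of the second kind, including $b_{0,0}=1$ and $b_{n,0}=0$ for $n>0$. *)

theory Defs
  imports "HOL-Analysis.Analysis"
begin

text \<open>Generalized exponentiation: x^[y] = 1 if x = y = 0, else x^y.
  For natural exponents this coincides with Isabelle's power (0 ^ 0 = 1).\<close>
definition gpow :: "real \<Rightarrow> nat \<Rightarrow> real" where
  "gpow x y = (if x = 0 \<and> y = 0 then 1 else x ^ y)"

definition bcoef :: "nat \<Rightarrow> nat \<Rightarrow> real" where
  "bcoef n k = (1 / fact k) *
     (\<Sum>i=0..k. (-1) ^ i * real (k choose i) * gpow (real (k - i)) n)"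

definition acoef :: "(real \<Rightarrow> real) \<Rightarrow> nat \<Rightarrow> real" where
  "acoef f n = (1 / fact n) * (\<Sum>k=0..n. (deriv ^^ k) f 0 * bcoef n k)"

end

(* The b(n,k) are the Stirling numbers of the second kind S(n,k), and k! S(n,k) is the n-th
   derivative at 0 of (e^t - 1)^k. Hence the polynomial P(t) = sum_{n<=N} a_n t^n has the same
   derivatives of order <= N at 0 as G(t) = sum_{k<=N} f^(k)(0)/k! (e^t - 1)^k. Composing with
   ln(1 + x) preserves this, because the m-th derivative of H(ln(1 + x)) at 0 is
   sum_{n<=m} s(m,n) H^(n)(0) with the signed Stirling numbers s(m,n) of the first kind. Finally
   G(ln(1 + x)) = sum_{k<=N} f^(k)(0)/k! x^k is the Taylor polynomial of f. *)

theory Submission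
  imports Defs "HOL-Computational_Algebra.Polynomial" "HOL-Combinatorics.Stirling"
begin

lemma alternating_power_sum_absorb:
  "(\<Sum>i\<le>Suc k. (-1) ^ i * real (Suc k choose i) * real (Suc k - i) ^ Suc n) =
     real (Suc k) * (\<Sum>i\<le>k. (-1) ^ i * real (k choose i) * real (Suc k - i) ^ n)"
proof -
  have absorb: "real (Suc k choose i) * real (Suc k - i) = real (Suc k) * real (k choose i)" for i
    by (metis binomial_absorb_comp diff_Suc_1 mult.commute of_nat_mult)
  have "(\<Sum>i\<le>Suc k. (-1) ^ i * real (Suc k choose i) * real (Suc k - i) ^ Suc n) =
        (\<Sum>i\<le>k. (-1) ^ i * (real (Suc k choose i) * real (Suc k - i)) * real (Suc k - i) ^ n)"
    by (simp add: mult_ac del: of_nat_diff)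
  also have "\<dots> = real (Suc k) * (\<Sum>i\<le>k. (-1) ^ i * real (k choose i) * real (Suc k - i) ^ n)"
    by (simp add: absorb sum_distrib_left mult_ac del: of_nat_diff)
  finally show ?thesis .
qed

lemma alternating_power_sum_Pascal:
  "(\<Sum>i\<le>Suc k. (-1) ^ i * real (Suc k choose i) * real (Suc k - i) ^ n) =
     (\<Sum>i\<le>k. (-1) ^ i * real (k choose i) * real (Suc k - i) ^ n) -
     (\<Sum>i\<le>k. (-1) ^ i * real (k choose i) * real (k - i) ^ n)"
proof -
  have "(\<Sum>i\<le>k. (-1) ^ i * real (k choose i) * real (Suc k - i) ^ n) =
        (\<Sum>i\<le>Suc k. (-1) ^ i * real (k choose i) * real (Suc k - i) ^ n)"
    by simp
  also have "\<dots> = real (Suc k) ^ n - (\<Sum>i\<le>k. (-1) ^ i * real (k choose Suc i) * real (k - i) ^ n)"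
    by (subst sum.atMost_Suc_shift) (simp add: sum_negf del: of_nat_diff)
  finally have shifted: "(\<Sum>i\<le>k. (-1) ^ i * real (k choose i) * real (Suc k - i) ^ n) =
      real (Suc k) ^ n - (\<Sum>i\<le>k. (-1) ^ i * real (k choose Suc i) * real (k - i) ^ n)" .
  show ?thesis
    unfolding shifted
    by (subst sum.atMost_Suc_shift) (simp add: sum_subtractf sum_negf ring_distribs del: of_nat_diff)
qed

lemma Stirling_closed_form:
  "fact k * real (Stirling n k) = (\<Sum>i\<le>k. (-1) ^ i * real (k choose i) * real (k - i) ^ n)"
proof (induction n arbitrary: k)
  case 0
  show ?case
    by (cases k) (simp_all add: choose_alternating_sum del: sum.atMost_Suc)
next
  case (Suc n)
  show ?case
  proof (cases k)
    case 0
    then show ?thesis by simp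
  next
    case (Suc k')
    have "fact k * real (Stirling (Suc n) k) =
          real k * (fact k * real (Stirling n k) + fact k' * real (Stirling n k'))"
      by (simp add: Suc algebra_simps)
    also have "\<dots> = real (Suc k') *
        ((\<Sum>i\<le>Suc k'. (-1) ^ i * real (Suc k' choose i) * real (Suc k' - i) ^ n) +
         (\<Sum>i\<le>k'. (-1) ^ i * real (k' choose i) * real (k' - i) ^ n))"
      by (simp only: Suc Suc.IH)
    also have "\<dots> = (\<Sum>i\<le>k. (-1) ^ i * real (k choose i) * real (k - i) ^ Suc n)"
      by (simp only: Suc alternating_power_sum_absorb alternating_power_sum_Pascal diff_add_cancel)
    finally show ?thesis .
  qed
qed

lemma gpow_eq_power: "gpow x n = x ^ n"
  by (simp add: gpow_def)

lemma bcoef_eq_Stirling: "bcoef n k = real (Stirling n k)"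
  unfolding bcoef_def gpow_eq_power atLeast0AtMost Stirling_closed_form[symmetric] by simp

lemma higher_deriv_linear_combination:
  fixes F :: "'a \<Rightarrow> real \<Rightarrow> real"
  assumes smooth: "\<And>k n t. k \<in> K \<Longrightarrow> (deriv ^^ n) (F k) differentiable (at t)"
  shows "(deriv ^^ n) (\<lambda>t. \<Sum>k\<in>K. c k * F k t) = (\<lambda>t. \<Sum>k\<in>K. c k * (deriv ^^ n) (F k) t)"
proof (induction n)
  case (Suc n)
  have "((\<lambda>t. \<Sum>k\<in>K. c k * (deriv ^^ n) (F k) t) has_real_derivative
          (\<Sum>k\<in>K. c k * (deriv ^^ Suc n) (F k) t)) (at t)" for t
    using smooth by (intro DERIV_sum DERIV_cmult) (simp add: DERIV_deriv_iff_real_differentiable)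
  then show ?case
    by (intro ext) (simp add: Suc DERIV_imp_deriv)
qed simp

lemma higher_deriv_linear_combination_differentiable:
  fixes F :: "'a \<Rightarrow> real \<Rightarrow> real"
  assumes "finite K"
    and smooth: "\<And>k n t. k \<in> K \<Longrightarrow> (deriv ^^ n) (F k) differentiable (at t)"
  shows "(deriv ^^ n) (\<lambda>t. \<Sum>k\<in>K. c k * F k t) differentiable (at t)"
  using assms by (subst higher_deriv_linear_combination)
    (auto intro!: differentiable_sum differentiable_mult differentiable_const)

lemma higher_deriv_exp_scaled:
  "(deriv ^^ n) (\<lambda>t. exp (r * t)) = (\<lambda>t. r ^ n * exp (r * t :: real))"
proof (induction n)
  case (Suc n)
  have "((\<lambda>t. r ^ n * exp (r * t)) has_real_derivative r ^ Suc n * exp (r * t)) (at t)" for t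
    by (auto intro!: derivative_eq_intros)
  then show ?case
    by (intro ext) (simp add: Suc DERIV_imp_deriv)
qed simp

lemma higher_deriv_exp_scaled_differentiable:
  "(deriv ^^ n) (\<lambda>t. exp (r * t)) differentiable (at (t :: real))"
proof -
  have "((\<lambda>t. r ^ n * exp (r * t)) has_real_derivative r ^ Suc n * exp (r * t)) (at t)"
    by (auto intro!: derivative_eq_intros)
  then show ?thesis
    unfolding higher_deriv_exp_scaled real_differentiable_def by blast
qed

lemma exp_minus_one_power_expand:
  "(exp t - 1) ^ k = (\<Sum>i\<le>k. real (k choose i) * (-1) ^ i * exp (real (k - i) * t))"
  using binomial_ring[of "-1" "exp t" k] by (simp add: exp_of_nat_mult del: of_nat_diff)

lemma higher_deriv_exp_minus_one_power_differentiable: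
  "(deriv ^^ n) (\<lambda>t. (exp t - 1) ^ k) differentiable (at (t :: real))"
  unfolding exp_minus_one_power_expand
  by (intro higher_deriv_linear_combination_differentiable higher_deriv_exp_scaled_differentiable)
    simp

lemma higher_deriv_exp_minus_one_power_0:
  "(deriv ^^ n) (\<lambda>t. (exp t - 1) ^ k) 0 = fact k * real (Stirling n k)"
proof -
  have "(deriv ^^ n) (\<lambda>t. (exp t - 1) ^ k) 0 =
        (\<Sum>i\<le>k. real (k choose i) * (-1) ^ i * (deriv ^^ n) (\<lambda>t. exp (real (k - i) * t)) 0)"
    unfolding exp_minus_one_power_expand
    by (subst higher_deriv_linear_combination[where F = "\<lambda>i t. exp (real (k - i) * t)"])
       (simp_all only: higher_deriv_exp_scaled_differentiable)
  also have "\<dots> = (\<Sum>i\<le>k. (-1) ^ i * real (k choose i) * real (k - i) ^ n)"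
    by (simp only: higher_deriv_exp_scaled) (simp add: mult_ac del: of_nat_diff)
  finally show ?thesis
    by (simp only: Stirling_closed_form)
qed

lemma higher_deriv_poly: "(deriv ^^ n) (poly p) = poly ((pderiv ^^ n) (p :: real poly))"
proof (induction n)
  case (Suc n)
  then show ?case
    by (intro ext) (simp add: DERIV_imp_deriv[OF poly_DERIV])
qed simp

lemma power_sum_eq_poly:
  "(\<lambda>x. \<Sum>n=0..N. a n * x ^ n) = poly (\<Sum>n=0..N. monom (a n) n :: 'a :: comm_semiring_1 poly)"
  by (simp add: fun_eq_iff poly_sum poly_monom)

lemma higher_deriv_power_sum_differentiable:
  "(deriv ^^ m) (\<lambda>x. \<Sum>n=0..N. a n * x ^ n) differentiable (at (t :: real))"
  unfolding power_sum_eq_poly higher_deriv_poly real_differentiable_def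
  using poly_DERIV by blast

lemma higher_deriv_power_sum_0:
  "(deriv ^^ m) (\<lambda>x. \<Sum>n=0..N. a n * x ^ n) (0 :: real) = (if m \<le> N then fact m * a m else 0)"
  unfolding power_sum_eq_poly higher_deriv_poly
  by (simp add: poly_0_coeff_0 coeff_higher_pderiv pochhammer_fact coeff_sum)

text \<open>The signed Stirling number of the first kind is \<open>(-1) ^ (m + n) * stirling m n\<close>; the
  exponent \<open>m + n\<close> has the parity of \<open>m - n\<close> without truncated subtraction.\<close>

lemma signed_stirling_sum_Suc:
  fixes v :: "nat \<Rightarrow> real"
  shows "(\<Sum>n\<le>Suc m. (-1) ^ (Suc m + n) * real (stirling (Suc m) n) * v n) =
    (\<Sum>n\<le>m. (-1) ^ (m + n) * real (stirling m n) * v (Suc n)) -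
    real m * (\<Sum>n\<le>m. (-1) ^ (m + n) * real (stirling m n) * v n)"
proof -
  have "(\<Sum>n\<le>m. (-1) ^ (m + n) * real (stirling m n) * v n) =
        (\<Sum>n\<le>Suc m. (-1) ^ (m + n) * real (stirling m n) * v n)"
    by simp
  also have "\<dots> = (-1) ^ m * real (stirling m 0) * v 0 -
      (\<Sum>n\<le>m. (-1) ^ (m + n) * real (stirling m (Suc n)) * v (Suc n))"
    by (subst sum.atMost_Suc_shift) (simp add: sum_negf)
  finally have shift: "real m * (\<Sum>n\<le>m. (-1) ^ (m + n) * real (stirling m n) * v n) =
      - real m * (\<Sum>n\<le>m. (-1) ^ (m + n) * real (stirling m (Suc n)) * v (Suc n))"
    by (cases "m = 0") simp_all
  have "(\<Sum>n\<le>Suc m. (-1) ^ (Suc m + n) * real (stirling (Suc m) n) * v n) =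
      (\<Sum>n\<le>m. (-1) ^ (m + n) * real (stirling m n) * v (Suc n)) +
      real m * (\<Sum>n\<le>m. (-1) ^ (m + n) * real (stirling m (Suc n)) * v (Suc n))"
    by (subst sum.atMost_Suc_shift) (simp add: sum.distrib sum_distrib_left algebra_simps)
  then show ?thesis
    by (simp only: shift)
qed

lemma higher_deriv_compose_ln_plus_one:
  fixes G :: "real \<Rightarrow> real"
  assumes smooth: "\<And>n t. (deriv ^^ n) G differentiable (at t)" and "x > -1"
  shows "(deriv ^^ m) (\<lambda>x. G (ln (x + 1))) x =
    (\<Sum>n\<le>m. (-1) ^ (m + n) * real (stirling m n) * (deriv ^^ n) G (ln (x + 1))) / (x + 1) ^ m"
  using \<open>x > -1\<close>
proof (induction m arbitrary: x)
  case (Suc m)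
  define R where "R y = (\<Sum>n\<le>m. (-1) ^ (m + n) * real (stirling m n) *
    (deriv ^^ n) G (ln (y + 1))) / (y + 1) ^ m" for y
  define v where "v n = (deriv ^^ n) G (ln (x + 1))" for n
  have pos: "x + 1 > 0"
    using Suc.prems by simp
  have "eventually (\<lambda>y. y \<in> {-1<..}) (nhds x)"
    using Suc.prems by (intro eventually_nhds_in_open) auto
  then have IH: "eventually (\<lambda>y. (deriv ^^ m) (\<lambda>x. G (ln (x + 1))) y = R y) (nhds x)"
    by eventually_elim (simp add: Suc.IH R_def)
  have "((\<lambda>y. (deriv ^^ n) G (ln (y + 1))) has_real_derivative v (Suc n) * (1 / (x + 1)))
      (at x)" for n
    using smooth pos unfolding v_def
    by (intro DERIV_chain2[where f = "(deriv ^^ n) G"])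
      (auto simp: DERIV_deriv_iff_real_differentiable intro!: derivative_eq_intros)
  then have "(R has_real_derivative
      ((\<Sum>n\<le>m. (-1) ^ (m + n) * real (stirling m n) * (v (Suc n) * (1 / (x + 1)))) * (x + 1) ^ m -
       (\<Sum>n\<le>m. (-1) ^ (m + n) * real (stirling m n) * v n) * (real m * (x + 1) ^ (m - 1) * 1)) /
      ((x + 1) ^ m * (x + 1) ^ m)) (at x)" (is "(R has_real_derivative ?D) _")
    unfolding R_def v_def using pos
    by (intro DERIV_divide DERIV_sum DERIV_cmult) (auto intro!: derivative_eq_intros)
  moreover have "?D = ((\<Sum>n\<le>m. (-1) ^ (m + n) * real (stirling m n) * v (Suc n)) -
      real m * (\<Sum>n\<le>m. (-1) ^ (m + n) * real (stirling m n) * v n)) / (x + 1) ^ Suc m"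
    (is "_ = (?A - _ * ?B) / _")
  proof -
    have "?D = (?A / (x + 1) * (x + 1) ^ m - ?B * (real m * (x + 1) ^ (m - 1))) /
        ((x + 1) ^ m * (x + 1) ^ m)"
      by (simp add: sum_divide_distrib mult.assoc)
    also have "\<dots> = (?A - real m * ?B) / (x + 1) ^ Suc m"
    proof -
      have "(A / y * y ^ m - B * (real m * y ^ (m - 1))) / (y ^ m * y ^ m) =
          (A - real m * B) / y ^ Suc m" if "y > 0" for A B y :: real
        using that by (cases m) (simp_all add: field_simps)
      then show ?thesis
        using pos by blast
    qed
    finally show ?thesis .
  qed
  ultimately have "(R has_real_derivative (\<Sum>n\<le>Suc m. (-1) ^ (Suc m + n) *
      real (stirling (Suc m) n) * v n) / (x + 1) ^ Suc m) (at x)"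
    by (simp only: signed_stirling_sum_Suc)
  then show ?case
    unfolding v_def using DERIV_cong_ev[OF refl IH refl]
    by (simp add: DERIV_imp_deriv)
qed simp

lemma higher_deriv_compose_ln_plus_one_0_cong:
  fixes G H :: "real \<Rightarrow> real"
  assumes "\<And>n t. (deriv ^^ n) G differentiable (at t)"
    and "\<And>n t. (deriv ^^ n) H differentiable (at t)"
    and "\<And>n. n \<le> m \<Longrightarrow> (deriv ^^ n) G 0 = (deriv ^^ n) H 0"
  shows "(deriv ^^ m) (\<lambda>x. G (ln (x + 1))) 0 = (deriv ^^ m) (\<lambda>x. H (ln (x + 1))) 0"
  using higher_deriv_compose_ln_plus_one[OF assms(1), of 0 m]
    higher_deriv_compose_ln_plus_one[OF assms(2), of 0 m]
  by (simp add: assms(3))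

theorem proposition4:
  fixes f :: "real \<Rightarrow> real"
  assumes smooth: "\<exists>S. open S \<and> 0 \<in> S \<and>
                     (\<forall>k. \<forall>x\<in>S. (deriv ^^ k) f differentiable (at x))"
  shows "\<forall>N m. m \<le> N \<longrightarrow>
           (deriv ^^ m) (\<lambda>x. \<Sum>n=0..N. acoef f n * (ln (x + 1)) ^ n) 0
             = (deriv ^^ m) f 0"
proof (intro allI impI)
  fix N m :: nat
  assume "m \<le> N"
  define c where "c k = (deriv ^^ k) f 0" for k
  define G where "G t = (\<Sum>k=0..N. c k / fact k * (exp t - 1) ^ k)" for t :: real
  have G_smooth: "(deriv ^^ n) G differentiable (at t)" for n t
    unfolding G_def
    by (intro higher_deriv_linear_combination_differentiable
        higher_deriv_exp_minus_one_power_differentiable) simp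
  have G_derivs: "(deriv ^^ n) G 0 = fact n * acoef f n" if "n \<le> N" for n
  proof -
    have "(deriv ^^ n) G 0 = (\<Sum>k=0..N. c k * real (Stirling n k))"
      unfolding G_def
      by (subst higher_deriv_linear_combination)
        (simp_all add: higher_deriv_exp_minus_one_power_differentiable higher_deriv_exp_minus_one_power_0)
    also have "\<dots> = (\<Sum>k=0..n. c k * real (Stirling n k))"
      using that by (intro sum.mono_neutral_right) auto
    also have "\<dots> = fact n * acoef f n"
      by (simp add: acoef_def bcoef_eq_Stirling c_def)
    finally show ?thesis .
  qed
  have "eventually (\<lambda>x. x \<in> {-1<..}) (nhds (0 :: real))"
    by (intro eventually_nhds_in_open) auto
  then have G_ln: "eventually (\<lambda>x. G (ln (x + 1)) = (\<Sum>k=0..N. c k / fact k * x ^ k)) (nhds 0)"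
    by eventually_elim (simp add: G_def)
  have "(deriv ^^ m) (\<lambda>x. \<Sum>n=0..N. acoef f n * (ln (x + 1)) ^ n) 0 =
      (deriv ^^ m) (\<lambda>x. G (ln (x + 1))) 0"
    using \<open>m \<le> N\<close>
    by (intro higher_deriv_compose_ln_plus_one_0_cong[where G = "\<lambda>t. \<Sum>n=0..N. acoef f n * t ^ n"]
        G_smooth higher_deriv_power_sum_differentiable) (simp add: G_derivs higher_deriv_power_sum_0)
  also have "\<dots> = (deriv ^^ m) (\<lambda>x. \<Sum>k=0..N. c k / fact k * x ^ k) 0"
    by (rule higher_deriv_cong_ev[OF G_ln refl])
  also have "\<dots> = c m"
    using \<open>m \<le> N\<close> by (simp only: higher_deriv_power_sum_0) simp
  finally show "(deriv ^^ m) (\<lambda>x. \<Sum>n=0..N. acoef f n * (ln (x + 1)) ^ n) 0 = (deriv ^^ m) f 0"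
    unfolding c_def .
qed

end
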